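(* Let $r\geq 1$. Suppose that $S_N$ admits the weak global Edgeworth expansion of order $r$ for all $f\in F^1_0$, with asymptotic mean $A=0$ and leading polynomial $P_{0,g}\equiv 1$: there are polynomials $P_{1,g},\dots,P_{r,g}$ with $\mathbb{E}(f(S_N))=\sum_{p=0}^r N^{-p/2}\int P_{p,g}(z)\mathfrak{n}(z)f(z\sqrt{N})\,dz+C^1_0(f)\,o(N^{-(r+1)/2})$ for all $f\in F^1_0$, the $o$-term independent of $f$. Let $(\epsilon_N)$ be positive reals with $\epsilon_N\to0$ and $\epsilon_N N^{r/2}\to\infty$. Then $$\frac{\sqrt{N}}{2\epsilon_N}\,\mathbb{P}\big(S_N\in(u-\epsilon_N,u+\epsilon_N)\big)=\frac{1}{\sqrt{2\pi\sigma^2}}e^{-\frac{u^2}{2N\sigma^2}}+o(1)$$ uniformly in $u\in\mathbb{R}$.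
   Context: $X_1,X_2,\dots$ are real random variables, $S_N=\sum_{n=1}^N X_n$, $\sigma^2>0$, $\mathfrak{n}(y)=\frac{1}{\sqrt{2\pi\sigma^2}}e^{-y^2/(2\sigma^2)}$. $F^1_0$ is the space of continuously differentiable $f:\mathbb{R}\to\mathbb{C}$ with $C^1_0(f)=\max(\|f\|_{L^1},\|f'\|_{L^1})+\|f\|_{L^1}<\infty$. The asymptotic mean $A=\lim_N\mathbb{E}(S_N/N)$ is assumed to be $0$. *)

theory Defs
  imports "HOL-Probability.Probability" "HOL-Computational_Algebra.Polynomial"
begin

definition gauss_dens :: "real \<Rightarrow> real \<Rightarrow> real" where
  "gauss_dens sigma2 y = 1 / sqrt (2 * pi * sigma2) * exp (- (y^2) / (2 * sigma2))"

definition F10 :: "(real \<Rightarrow> complex) \<Rightarrow> bool" where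
  "F10 f \<longleftrightarrow> (\<exists>f'. (\<forall>x. (f has_vector_derivative f' x) (at x))
      \<and> continuous_on UNIV f' \<and> integrable lborel f \<and> integrable lborel f')"

definition C10 :: "(real \<Rightarrow> complex) \<Rightarrow> real" where
  "C10 f = max (LINT x|lborel. norm (f x)) (LINT x|lborel. norm (vector_derivative f (at x)))
           + (LINT x|lborel. norm (f x))"

end

theory Submission
  imports Defs
begin

text \<open>Sandwich the indicator of the window (u - eps, u + eps) between two C^1 trapezoids
  whose ramps have width delta * eps. Their C^1_0 norms are O(1 / delta), so the Edgeworth
  expansion determines their expectations up to o(eps / sqrt N), because eps N^(r/2) tends to
  infinity.
  In the expansion the terms with p \<ge> 1 contribute O(eps / N), and by the Lipschitz continuity of
  the Gaussian density n the leading term is 2 eps n(u / sqrt N) / sqrt N up to a relative error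
  O(delta) from the area of the trapezoid plus O(1 / sqrt N). None of these bounds depends on u,
  and delta can be taken arbitrarily small.\<close>

section \<open>A C^1 step function\<close>

definition unit_clamp :: "real \<Rightarrow> real" where
  "unit_clamp t = max 0 (min 1 t)"

definition smoothstep :: "real \<Rightarrow> real" where
  "smoothstep t = 3 * (unit_clamp t)^2 - 2 * (unit_clamp t)^3"

definition smoothstep' :: "real \<Rightarrow> real" where
  "smoothstep' t = 6 * unit_clamp t * (1 - unit_clamp t)"

lemma continuous_on_unit_clamp: "continuous_on UNIV unit_clamp"
  unfolding unit_clamp_def by (intro continuous_intros)

lemma continuous_on_smoothstep: "continuous_on UNIV smoothstep"
  unfolding smoothstep_def
  by (intro continuous_intros continuous_on_unit_clamp[THEN continuous_on_subset]) auto

lemma continuous_on_smoothstep': "continuous_on UNIV smoothstep'"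
  unfolding smoothstep'_def
  by (intro continuous_intros continuous_on_unit_clamp[THEN continuous_on_subset]) auto

lemma smoothstep_bounds: "0 \<le> smoothstep t" "smoothstep t \<le> 1"
proof -
  have m: "0 \<le> unit_clamp t" "unit_clamp t \<le> 1" by (auto simp: unit_clamp_def)
  have "smoothstep t = (unit_clamp t)^2 * (3 - 2 * unit_clamp t)"
    unfolding smoothstep_def by (simp add: power2_eq_square power3_eq_cube algebra_simps)
  then show "0 \<le> smoothstep t" using m by simp
  have "(1 - unit_clamp t)^2 * (1 + 2 * unit_clamp t) \<ge> 0" using m by simp
  then show "smoothstep t \<le> 1"
    unfolding smoothstep_def by (simp add: algebra_simps power2_eq_square power3_eq_cube)
qed

lemma smoothstep'_bounds: "0 \<le> smoothstep' t" "smoothstep' t \<le> 3/2"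
proof -
  have m: "0 \<le> unit_clamp t" "unit_clamp t \<le> 1" by (auto simp: unit_clamp_def)
  show "0 \<le> smoothstep' t" unfolding smoothstep'_def using m by simp
  have "(2 * unit_clamp t - 1)^2 \<ge> 0" by simp
  then show "smoothstep' t \<le> 3/2"
    unfolding smoothstep'_def by (simp add: algebra_simps power2_eq_square)
qed

lemma smoothstep_nonpos: "t \<le> 0 \<Longrightarrow> smoothstep t = 0 \<and> smoothstep' t = 0"
  by (simp add: smoothstep_def smoothstep'_def unit_clamp_def)

lemma smoothstep_ge_one: "t \<ge> 1 \<Longrightarrow> smoothstep t = 1 \<and> smoothstep' t = 0"
  by (simp add: smoothstep_def smoothstep'_def unit_clamp_def)

lemma smoothstep_unit_interval:
  "0 < t \<Longrightarrow> t < 1 \<Longrightarrow> smoothstep t = 3 * t^2 - 2 * t^3 \<and> smoothstep' t = 6 * t - 6 * t^2"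
  by (simp add: smoothstep_def smoothstep'_def unit_clamp_def power2_eq_square algebra_simps)

lemma smoothstep_le_square: "smoothstep t \<le> 3 * t^2"
proof (cases "0 < t \<and> t < 1")
  case True
  then have "smoothstep t = t^2 * (3 - 2 * t)"
    using smoothstep_unit_interval[of t] by (simp add: power2_eq_square power3_eq_cube algebra_simps)
  then show ?thesis using True by (simp add: mult_left_mono)
next
  case False
  then consider "t \<le> 0" | "1 \<le> t" by fastforce
  then show ?thesis
  proof cases
    case 2
    then have "1 \<le> t^2" by (simp add: one_le_power)
    then show ?thesis using 2 smoothstep_ge_one[of t] by linarith
  qed (simp add: smoothstep_nonpos)
qed

lemma one_minus_smoothstep_le_square: "1 - smoothstep t \<le> 3 * (t - 1)^2"
proof (cases "0 < t \<and> t < 1")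
  case True
  then have "1 - smoothstep t = (1 - t)^2 * (1 + 2 * t)"
    using smoothstep_unit_interval[of t] by (simp add: power2_eq_square power3_eq_cube algebra_simps)
  moreover have "(1 - t)^2 * (1 + 2 * t) \<le> (1 - t)^2 * 3" using True by (intro mult_left_mono) auto
  ultimately show ?thesis by (simp add: power2_commute)
next
  case False
  then consider "t \<le> 0" | "1 \<le> t" by fastforce
  then show ?thesis
  proof cases
    case 1
    then have "1 \<le> (t - 1)^2" using one_le_power[of "1 - t" 2] by (simp add: power2_commute)
    then show ?thesis using 1 smoothstep_nonpos by simp
  qed (simp add: smoothstep_ge_one)
qed

lemma has_real_derivative_zero_if_quadratic_contact:
  fixes f :: "real \<Rightarrow> real"
  assumes "\<And>s. \<bar>f s - f t\<bar> \<le> K * (s - t)^2"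
  shows "(f has_real_derivative 0) (at t)"
  unfolding DERIV_def
proof (rule Lim_null_comparison)
  show "\<forall>\<^sub>F h in at 0. norm ((f (t + h) - f t) / h) \<le> \<bar>K\<bar> * \<bar>h\<bar>"
  proof (rule always_eventually, intro allI)
    fix h :: real
    have "K * h^2 \<le> \<bar>K\<bar> * \<bar>h\<bar> * \<bar>h\<bar>"
      by (simp add: power2_eq_square mult.assoc abs_mult_self_eq mult_right_mono)
    then have "\<bar>f (t + h) - f t\<bar> \<le> \<bar>K\<bar> * \<bar>h\<bar> * \<bar>h\<bar>"
      using assms[of "t + h"] by simp
    then show "norm ((f (t + h) - f t) / h) \<le> \<bar>K\<bar> * \<bar>h\<bar>"
      by (cases "h = 0") (simp_all add: divide_le_eq)
  qed
  show "((\<lambda>h. \<bar>K\<bar> * \<bar>h\<bar>) \<longlongrightarrow> 0) (at 0)"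
    by (auto intro!: tendsto_eq_intros)
qed

lemma has_real_derivative_smoothstep: "(smoothstep has_real_derivative smoothstep' t) (at t)"
proof -
  consider "t < 0" | "t = 0" | "0 < t \<and> t < 1" | "t = 1" | "t > 1" by linarith
  then show ?thesis
  proof cases
    case 1
    have "((\<lambda>_. 0) has_real_derivative smoothstep' t) (at t)" using 1 smoothstep_nonpos by simp
    then show ?thesis
      by (rule has_field_derivative_transform_within_open[where S="{..<0}"])
         (use 1 smoothstep_nonpos in auto)
  next
    case 2
    have "(smoothstep has_real_derivative 0) (at t)"
      by (rule has_real_derivative_zero_if_quadratic_contact[where K=3])
         (use 2 smoothstep_nonpos smoothstep_le_square smoothstep_bounds in simp)
    then show ?thesis using 2 smoothstep_nonpos by simp
  next
    case 3
    have "((\<lambda>s. 3 * s^2 - 2 * s^3) has_real_derivative smoothstep' t) (at t)"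
      using 3 smoothstep_unit_interval[of t]
      by (auto intro!: derivative_eq_intros simp: power2_eq_square)
    then show ?thesis
      by (rule has_field_derivative_transform_within_open[where S="{0<..<1}"])
         (use 3 smoothstep_unit_interval in auto)
  next
    case 4
    have "(smoothstep has_real_derivative 0) (at t)"
      by (rule has_real_derivative_zero_if_quadratic_contact[where K=3])
         (use 4 smoothstep_ge_one one_minus_smoothstep_le_square smoothstep_bounds in simp)
    then show ?thesis using 4 smoothstep_ge_one by simp
  next
    case 5
    have "((\<lambda>_. 1) has_real_derivative smoothstep' t) (at t)" using 5 smoothstep_ge_one by simp
    then show ?thesis
      by (rule has_field_derivative_transform_within_open[where S="{1<..}"])
         (use 5 smoothstep_ge_one in auto)
  qed
qed

section \<open>Smooth plateau functions\<close>

definition smooth_plateau :: "real \<Rightarrow> real \<Rightarrow> real \<Rightarrow> real \<Rightarrow> real" where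
  "smooth_plateau a b c x = smoothstep ((x - a + c) / c) * smoothstep ((b + c - x) / c)"

definition smooth_plateau' :: "real \<Rightarrow> real \<Rightarrow> real \<Rightarrow> real \<Rightarrow> real" where
  "smooth_plateau' a b c x = smoothstep' ((x - a + c) / c) / c * smoothstep ((b + c - x) / c)
      - smoothstep ((x - a + c) / c) * smoothstep' ((b + c - x) / c) / c"

lemma has_real_derivative_smooth_plateau:
  assumes "c > 0"
  shows "(smooth_plateau a b c has_real_derivative smooth_plateau' a b c x) (at x)"
proof -
  have step: "((\<lambda>x. smoothstep (g x)) has_real_derivative smoothstep' (g x) * g') (at x)"
    if "(g has_real_derivative g') (at x)" for g g'
    using DERIV_chain2[OF has_real_derivative_smoothstep that] .
  have left: "((\<lambda>x. smoothstep ((x - a + c) / c))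
      has_real_derivative smoothstep' ((x - a + c) / c) * (1/c)) (at x)"
    by (rule step) (use assms in \<open>auto intro!: derivative_eq_intros\<close>)
  have right: "((\<lambda>x. smoothstep ((b + c - x) / c))
      has_real_derivative smoothstep' ((b + c - x) / c) * (-1/c)) (at x)"
    by (rule step) (use assms in \<open>auto intro!: derivative_eq_intros\<close>)
  show ?thesis
    unfolding smooth_plateau_def[abs_def]
    by (rule DERIV_cong[OF DERIV_mult[OF left right]]) (simp add: smooth_plateau'_def)
qed

lemma continuous_on_smooth_plateau: "c > 0 \<Longrightarrow> continuous_on UNIV (smooth_plateau a b c)"
  unfolding smooth_plateau_def[abs_def]
  by (intro continuous_intros continuous_on_compose2[OF continuous_on_smoothstep]) auto

lemma continuous_on_smooth_plateau': "c > 0 \<Longrightarrow> continuous_on UNIV (smooth_plateau' a b c)"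
  unfolding smooth_plateau'_def[abs_def]
  by (intro continuous_intros continuous_on_compose2[OF continuous_on_smoothstep]
      continuous_on_compose2[OF continuous_on_smoothstep']) auto

lemma smooth_plateau_bounds: "0 \<le> smooth_plateau a b c x" "smooth_plateau a b c x \<le> 1"
  unfolding smooth_plateau_def using smoothstep_bounds by (auto intro: mult_le_one)

lemma smooth_plateau_outside:
  assumes "c > 0" "x \<notin> {a - c<..<b + c}"
  shows "smooth_plateau a b c x = 0 \<and> smooth_plateau' a b c x = 0"
proof -
  have "(x - a + c) / c \<le> 0 \<or> (b + c - x) / c \<le> 0"
    using assms by (auto simp: divide_le_0_iff)
  then show ?thesis
    by (auto simp: smooth_plateau_def smooth_plateau'_def dest: smoothstep_nonpos)
qed

lemma smooth_plateau_inside: "c > 0 \<Longrightarrow> x \<in> {a..b} \<Longrightarrow> smooth_plateau a b c x = 1"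
  by (simp add: smooth_plateau_def le_divide_eq smoothstep_ge_one)

lemma abs_smooth_plateau'_le:
  assumes "c > 0"
  shows "\<bar>smooth_plateau' a b c x\<bar> \<le> 3 / c"
proof -
  define p where "p = smoothstep' ((x - a + c) / c) * smoothstep ((b + c - x) / c)"
  define q where "q = smoothstep' ((b + c - x) / c) * smoothstep ((x - a + c) / c)"
  have "0 \<le> smoothstep' s * smoothstep t \<and> smoothstep' s * smoothstep t \<le> 3/2" for s t
    using mult_mono[OF smoothstep'_bounds(2) smoothstep_bounds(2)] smoothstep_bounds smoothstep'_bounds
    by simp
  then have "0 \<le> p" "p \<le> 3/2" "0 \<le> q" "q \<le> 3/2" unfolding p_def q_def by auto
  then have "\<bar>p - q\<bar> \<le> 3" by linarith
  moreover have "smooth_plateau' a b c x = (p - q) / c"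
    by (simp add: smooth_plateau'_def p_def q_def diff_divide_distrib mult.commute)
  ultimately show ?thesis using assms by (simp add: divide_right_mono)
qed

lemma integrable_lborel_if_bounded_by_interval:
  fixes f :: "real \<Rightarrow> real"
  assumes "f \<in> borel_measurable borel" "\<And>x. \<bar>f x\<bar> \<le> K * indicator {A..B} x" "A \<le> B"
  shows "integrable lborel f" "(LINT x|lborel. \<bar>f x\<bar>) \<le> K * (B - A)"
proof -
  have int: "integrable lborel (\<lambda>x. K * indicator {A..B} x :: real)"
    by (intro integrable_mult_right integrable_real_indicator) (auto simp: emeasure_lborel_Icc_eq)
  have "norm (f x) \<le> norm (K * indicator {A..B} x)" for x
    using assms(2)[of x] by simp
  then show "integrable lborel f"
    using assms(1) by (intro Bochner_Integration.integrable_bound[OF int] always_eventually allI) auto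
  then have "(LINT x|lborel. \<bar>f x\<bar>) \<le> (LINT x|lborel. K * indicator {A..B} x)"
    using assms(2) by (intro integral_mono integrable_abs int) auto
  then show "(LINT x|lborel. \<bar>f x\<bar>) \<le> K * (B - A)"
    using assms(3) by (simp add: measure_lborel_Icc)
qed

lemma smooth_plateau_bounded_by_interval:
  assumes "c > 0"
  shows "\<bar>smooth_plateau a b c x\<bar> \<le> 1 * indicator {a - c..b + c} x"
    and "\<bar>smooth_plateau' a b c x\<bar> \<le> 3 / c * indicator {a - c..b + c} x"
  using smooth_plateau_bounds[of a b c x] abs_smooth_plateau'_le[OF assms, of a b x]
    smooth_plateau_outside[OF assms, of x]
  by (cases "x \<in> {a - c..b + c}"; auto)+

lemma
  assumes "c > 0" "a \<le> b"
  shows integrable_smooth_plateau: "integrable lborel (smooth_plateau a b c)"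
    and L1_norm_smooth_plateau_le: "(LINT x|lborel. \<bar>smooth_plateau a b c x\<bar>) \<le> b - a + 2 * c"
    and integrable_smooth_plateau': "integrable lborel (smooth_plateau' a b c)"
    and L1_norm_smooth_plateau'_le: "(LINT x|lborel. \<bar>smooth_plateau' a b c x\<bar>) \<le> 3 / c * (b - a + 2 * c)"
proof -
  have support: "a - c \<le> b + c" "(b + c) - (a - c) = b - a + 2 * c" using assms by simp_all
  show "integrable lborel (smooth_plateau a b c)"
    "(LINT x|lborel. \<bar>smooth_plateau a b c x\<bar>) \<le> b - a + 2 * c"
    using integrable_lborel_if_bounded_by_interval[OF
        borel_measurable_continuous_onI[OF continuous_on_smooth_plateau[OF assms(1)]]
        smooth_plateau_bounded_by_interval(1)[OF assms(1)] support(1)] support(2)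
    by simp_all
  show "integrable lborel (smooth_plateau' a b c)"
    "(LINT x|lborel. \<bar>smooth_plateau' a b c x\<bar>) \<le> 3 / c * (b - a + 2 * c)"
    using integrable_lborel_if_bounded_by_interval[OF
        borel_measurable_continuous_onI[OF continuous_on_smooth_plateau'[OF assms(1)]]
        smooth_plateau_bounded_by_interval(2)[OF assms(1)] support(1)] support(2)
    by simp_all
qed

lemma integral_smooth_plateau_bounds:
  assumes "c > 0" "a \<le> b"
  shows "b - a \<le> (LINT x|lborel. smooth_plateau a b c x)"
    and "(LINT x|lborel. smooth_plateau a b c x) \<le> b - a + 2 * c"
proof -
  have "(LINT x|lborel. indicator {a..b} x) \<le> (LINT x|lborel. smooth_plateau a b c x)"
    using smooth_plateau_inside[OF assms(1)] smooth_plateau_bounds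
    by (intro integral_mono integrable_smooth_plateau assms integrable_real_indicator)
       (auto simp: indicator_def emeasure_lborel_Icc_eq)
  then show "b - a \<le> (LINT x|lborel. smooth_plateau a b c x)"
    using assms(2) by (simp add: measure_lborel_Icc)
  show "(LINT x|lborel. smooth_plateau a b c x) \<le> b - a + 2 * c"
    using L1_norm_smooth_plateau_le[OF assms] smooth_plateau_bounds by simp
qed

lemma F10_smooth_plateau: "c > 0 \<Longrightarrow> a \<le> b \<Longrightarrow> F10 (\<lambda>x. complex_of_real (smooth_plateau a b c x))"
  unfolding F10_def
  by (intro exI[of _ "\<lambda>x. complex_of_real (smooth_plateau' a b c x)"] conjI allI
      has_vector_derivative_of_real has_real_derivative_smooth_plateau continuous_intros
      continuous_on_smooth_plateau' integrable_bounded_linear[OF bounded_linear_of_real]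
      integrable_smooth_plateau integrable_smooth_plateau')

lemma C10_smooth_plateau_le:
  assumes "c > 0" "a \<le> b"
  shows "C10 (\<lambda>x. complex_of_real (smooth_plateau a b c x)) \<le> (b - a + 2 * c) * (2 + 3 / c)"
proof -
  have "vector_derivative (\<lambda>x. complex_of_real (smooth_plateau a b c x)) (at x)
      = complex_of_real (smooth_plateau' a b c x)" for x
    by (intro vector_derivative_at has_vector_derivative_of_real has_real_derivative_smooth_plateau assms)
  then have "C10 (\<lambda>x. complex_of_real (smooth_plateau a b c x))
      = max (LINT x|lborel. \<bar>smooth_plateau a b c x\<bar>) (LINT x|lborel. \<bar>smooth_plateau' a b c x\<bar>)
        + (LINT x|lborel. \<bar>smooth_plateau a b c x\<bar>)"
    by (simp add: C10_def)
  also have "\<dots> \<le> ((b - a + 2 * c) + 3 / c * (b - a + 2 * c)) + (b - a + 2 * c)"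
  proof (intro add_mono max.boundedI)
    have "0 \<le> b - a + 2 * c" "0 \<le> 3 / c * (b - a + 2 * c)" using assms by simp_all
    then show "(LINT x|lborel. \<bar>smooth_plateau a b c x\<bar>) \<le> (b - a + 2 * c) + 3 / c * (b - a + 2 * c)"
      "(LINT x|lborel. \<bar>smooth_plateau' a b c x\<bar>) \<le> (b - a + 2 * c) + 3 / c * (b - a + 2 * c)"
      using L1_norm_smooth_plateau_le[OF assms] L1_norm_smooth_plateau'_le[OF assms] by linarith+
  qed (use L1_norm_smooth_plateau_le[OF assms] in simp)
  also have "\<dots> = (b - a + 2 * c) * (2 + 3 / c)"
    using assms(1) by (simp add: field_simps)
  finally show ?thesis .
qed

lemma
  assumes "finite_measure M" "Z \<in> borel_measurable M" "c > 0"
  shows expectation_smooth_plateau_le_measure: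
      "(\<integral>x. smooth_plateau a b c (Z x) \<partial>M) \<le> measure M {x \<in> space M. Z x \<in> {a - c<..<b + c}}"
    and measure_le_expectation_smooth_plateau:
      "measure M {x \<in> space M. Z x \<in> {a<..<b}} \<le> (\<integral>x. smooth_plateau a b c (Z x) \<partial>M)"
proof -
  interpret finite_measure M by fact
  have int_plateau: "integrable M (\<lambda>x. smooth_plateau a b c (Z x))"
    using smooth_plateau_bounds
    by (intro integrable_const_bound[where B=1] measurable_compose[OF assms(2)]
        borel_measurable_continuous_onI continuous_on_smooth_plateau assms(3)) auto
  have measure_eq: "measure M {x \<in> space M. Z x \<in> I} = (\<integral>x. indicator {x \<in> space M. Z x \<in> I} x \<partial>M)"
    and int_indicator: "integrable M (indicator {x \<in> space M. Z x \<in> I} :: 'a \<Rightarrow> real)"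
    if "open I" for I :: "real set"
  proof -
    have "{x \<in> space M. Z x \<in> I} \<in> sets M"
      using measurable_sets[OF assms(2), of I] that by (simp add: vimage_def Int_def conj_commute)
    then show "measure M {x \<in> space M. Z x \<in> I} = (\<integral>x. indicator {x \<in> space M. Z x \<in> I} x \<partial>M)"
      "integrable M (indicator {x \<in> space M. Z x \<in> I} :: 'a \<Rightarrow> real)"
      by (auto simp: less_top[symmetric])
  qed
  show "(\<integral>x. smooth_plateau a b c (Z x) \<partial>M) \<le> measure M {x \<in> space M. Z x \<in> {a - c<..<b + c}}"
    unfolding measure_eq[OF open_greaterThanLessThan]
    using smooth_plateau_bounds smooth_plateau_outside[OF assms(3)]
    by (intro integral_mono int_plateau int_indicator) (auto simp: indicator_def)
  show "measure M {x \<in> space M. Z x \<in> {a<..<b}} \<le> (\<integral>x. smooth_plateau a b c (Z x) \<partial>M)"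
    unfolding measure_eq[OF open_greaterThanLessThan]
    using smooth_plateau_bounds smooth_plateau_inside[OF assms(3)]
    by (intro integral_mono int_plateau int_indicator) (auto simp: indicator_def)
qed

section \<open>The Gaussian density\<close>

lemma gauss_dens_pos: "s > 0 \<Longrightarrow> 0 < gauss_dens s z"
  by (simp add: gauss_dens_def)

lemma gauss_dens_le: "s > 0 \<Longrightarrow> gauss_dens s z \<le> 1 / sqrt (2 * pi * s)"
  unfolding gauss_dens_def by (intro mult_left_le) (auto simp: divide_nonpos_pos)

lemma gauss_dens_rescaled:
  "Nr > 0 \<Longrightarrow> gauss_dens s (u / sqrt Nr) = 1 / sqrt (2 * pi * s) * exp (- (u^2) / (2 * Nr * s))"
  by (simp add: gauss_dens_def power_divide mult.commute mult.left_commute)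

lemma continuous_on_gauss_dens: "s > 0 \<Longrightarrow> continuous_on UNIV (gauss_dens s)"
  unfolding gauss_dens_def[abs_def] by (intro continuous_intros) auto

lemma power_le_fact_mult_exp:
  fixes x :: real
  assumes "x \<ge> 0"
  shows "x ^ n \<le> fact n * exp x"
proof -
  have s: "(\<lambda>n. x^n /\<^sub>R fact n) sums exp x" by (rule exp_converges)
  have "sum (\<lambda>n. x^n /\<^sub>R fact n) {n} \<le> suminf (\<lambda>n. x^n /\<^sub>R fact n)"
    using s assms by (intro sum_le_suminf) (auto simp: sums_iff)
  then have "x^n / fact n \<le> exp x" using s by (simp add: sums_iff divide_inverse_commute)
  then show ?thesis by (simp add: divide_le_eq mult.commute)
qed

lemma poly_times_gauss_dens_bounded:
  assumes "s > 0"
  shows "\<exists>B. \<forall>z. \<bar>poly q z * gauss_dens s z\<bar> \<le> B"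
proof -
  define K where "K = (\<Sum>i\<le>degree q. \<bar>coeff q i\<bar> * fact i)"
  have "\<bar>poly q z * gauss_dens s z\<bar> \<le> K / sqrt (2 * pi * s) * exp (s / 2)" for z
  proof -
    have "\<bar>poly q z\<bar> \<le> (\<Sum>i\<le>degree q. \<bar>coeff q i\<bar> * \<bar>z\<bar>^i)"
      unfolding poly_altdef by (rule order_trans[OF sum_abs]) (simp add: abs_mult power_abs)
    also have "\<dots> \<le> (\<Sum>i\<le>degree q. \<bar>coeff q i\<bar> * (fact i * exp \<bar>z\<bar>))"
      by (intro sum_mono mult_left_mono power_le_fact_mult_exp) auto
    finally have poly_le: "\<bar>poly q z\<bar> \<le> K * exp \<bar>z\<bar>"
      by (simp add: K_def sum_distrib_right mult.assoc)
    have "\<bar>z\<bar> - z^2 / (2 * s) \<le> s / 2"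
      using zero_le_power2[of "\<bar>z\<bar> - s"] assms by (simp add: field_simps power2_eq_square)
    then have exp_le: "exp \<bar>z\<bar> * exp (- (z^2) / (2 * s)) \<le> exp (s / 2)"
      by (simp flip: exp_add)
    have "\<bar>poly q z\<bar> * exp (- (z^2) / (2 * s)) \<le> K * (exp \<bar>z\<bar> * exp (- (z^2) / (2 * s)))"
      using mult_right_mono[OF poly_le, of "exp (- (z^2) / (2 * s))"] by (simp add: mult.assoc)
    also have "\<dots> \<le> K * exp (s / 2)"
      using exp_le by (intro mult_left_mono) (auto simp: K_def intro: sum_nonneg)
    finally have "\<bar>poly q z\<bar> * exp (- (z^2) / (2 * s)) \<le> K * exp (s / 2)" .
    then show ?thesis
      using assms by (simp add: gauss_dens_def abs_mult divide_right_mono)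
  qed
  then show ?thesis by blast
qed

lemma gauss_dens_lipschitz: "s > 0 \<Longrightarrow> \<exists>L. L-lipschitz_on UNIV (gauss_dens s)"
proof -
  assume s: "s > 0"
  obtain B where B: "\<And>z. \<bar>poly [:0, -1/s:] z * gauss_dens s z\<bar> \<le> B"
    using poly_times_gauss_dens_bounded[OF s] by blast
  have deriv: "(gauss_dens s has_real_derivative poly [:0, -1/s:] z * gauss_dens s z) (at z)" for z
    unfolding gauss_dens_def[abs_def] using s
    by (auto intro!: derivative_eq_intros simp: field_simps power2_eq_square)
  have "B-lipschitz_on UNIV (gauss_dens s)"
  proof (rule bounded_derivative_imp_lipschitz)
    show "(gauss_dens s has_derivative (*) (poly [:0, -1/s:] z * gauss_dens s z)) (at z within UNIV)"
      for z using deriv[of z] by (simp add: has_field_derivative_def)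
    show "onorm ((*) (poly [:0, -1/s:] z * gauss_dens s z)) \<le> B" for z
      using mult_right_mono[OF B[of z] abs_ge_zero] by (intro onorm_le) (simp add: abs_mult)
    show "0 \<le> B" using B[of 0] by linarith
  qed auto
  then show ?thesis by blast
qed

section \<open>The Edgeworth sum of a window function\<close>

definition edgeworth_sum :: "real \<Rightarrow> (nat \<Rightarrow> real poly) \<Rightarrow> nat \<Rightarrow> real \<Rightarrow> (real \<Rightarrow> real) \<Rightarrow> real" where
  "edgeworth_sum s P r Nr \<phi> = (\<Sum>p\<le>r. Nr powr (- real p / 2) *
      (LINT z|lborel. poly (P p) z * gauss_dens s z * \<phi> (z * sqrt Nr)))"

lemma lborel_integral_rescale:
  fixes g \<phi> :: "real \<Rightarrow> real"
  assumes "t > 0"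
  shows "(LINT z|lborel. g z * \<phi> (z * t)) = (LINT y|lborel. g (y / t) * \<phi> y) / t"
proof -
  have "(LINT z|lborel. g z * \<phi> (z * t))
      = \<bar>1 / t\<bar> *\<^sub>R (LINT y|lborel. g (0 + 1 / t * y) * \<phi> ((0 + 1 / t * y) * t))"
    by (rule lborel_integral_real_affine) (use assms in auto)
  then show ?thesis using assms by simp
qed

lemma borel_measurable_rescaled:
  fixes g :: "real \<Rightarrow> real"
  assumes "continuous_on UNIV g"
  shows "(\<lambda>y. g (y / t)) \<in> borel_measurable lborel"
proof -
  have "continuous_on UNIV (\<lambda>y. g (y / t))"
    unfolding divide_inverse by (intro continuous_on_compose2[OF assms] continuous_intros) auto
  then show ?thesis using borel_measurable_continuous_onI by simp
qed

lemma abs_integral_rescaled_bounded_times_le: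
  fixes g \<phi> :: "real \<Rightarrow> real"
  assumes "continuous_on UNIV g" "\<And>z. \<bar>g z\<bar> \<le> B" "integrable lborel \<phi>"
  shows "\<bar>LINT y|lborel. g (y / t) * \<phi> y\<bar> \<le> B * (LINT y|lborel. \<bar>\<phi> y\<bar>)"
proof -
  have le: "\<bar>g (y / t) * \<phi> y\<bar> \<le> B * \<bar>\<phi> y\<bar>" for y
    using assms(2)[of "y / t"] by (simp add: abs_mult mult_right_mono)
  have int: "integrable lborel (\<lambda>y. g (y / t) * \<phi> y)"
  proof (rule Bochner_Integration.integrable_bound[where f="\<lambda>y. B * \<bar>\<phi> y\<bar>", rotated])
    show "(\<lambda>y. g (y / t) * \<phi> y) \<in> borel_measurable lborel"
      using borel_measurable_rescaled[OF assms(1)] borel_measurable_integrable[OF assms(3)]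
      by (rule borel_measurable_times)
    show "AE y in lborel. norm (g (y / t) * \<phi> y) \<le> norm (B * \<bar>\<phi> y\<bar>)"
      using le by (intro always_eventually allI) (simp add: order_trans[OF _ abs_ge_self])
  qed (use assms(3) in simp)
  have "\<bar>LINT y|lborel. g (y / t) * \<phi> y\<bar> \<le> (LINT y|lborel. B * \<bar>\<phi> y\<bar>)"
    using int assms(3) le by (intro integral_abs_bound[THEN order_trans] integral_mono) auto
  then show "\<bar>LINT y|lborel. g (y / t) * \<phi> y\<bar> \<le> B * (LINT y|lborel. \<bar>\<phi> y\<bar>)" by simp
qed

lemma integral_rescaled_lipschitz_times:
  fixes g \<phi> :: "real \<Rightarrow> real"
  assumes lip: "L-lipschitz_on UNIV g" and "t > 0" "integrable lborel \<phi>" "\<And>y. 0 \<le> \<phi> y"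
    and supp: "\<And>y. R < \<bar>y - u\<bar> \<Longrightarrow> \<phi> y = 0"
  shows "\<bar>(LINT y|lborel. g (y / t) * \<phi> y) - g (u / t) * (LINT y|lborel. \<phi> y)\<bar>
      \<le> L * R / t * (LINT y|lborel. \<phi> y)"
proof -
  have L: "0 \<le> L" using lipschitz_on_nonneg[OF lip] .
  have le: "\<bar>(g (y / t) - g (u / t)) * \<phi> y\<bar> \<le> L * R / t * \<phi> y" for y
  proof (cases "R < \<bar>y - u\<bar>")
    case False
    have "\<bar>g (y / t) - g (u / t)\<bar> \<le> L * \<bar>y / t - u / t\<bar>"
      using lipschitz_onD[OF lip, of "y / t" "u / t"] by (simp add: dist_real_def)
    also have "\<dots> = L * (\<bar>y - u\<bar> / t)" using \<open>t > 0\<close> by (simp flip: diff_divide_distrib)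
    also have "\<dots> \<le> L * R / t"
      using False L \<open>t > 0\<close> by (simp add: mult_left_mono divide_right_mono)
    finally have "\<bar>g (y / t) - g (u / t)\<bar> * \<phi> y \<le> L * R / t * \<phi> y"
      by (rule mult_right_mono[OF _ assms(4)])
    then show ?thesis using assms(4)[of y] by (simp add: abs_mult)
  qed (simp add: supp)
  have int: "integrable lborel (\<lambda>y. (g (y / t) - g (u / t)) * \<phi> y)"
  proof (rule Bochner_Integration.integrable_bound[where f="\<lambda>y. L * R / t * \<phi> y", rotated])
    show "(\<lambda>y. (g (y / t) - g (u / t)) * \<phi> y) \<in> borel_measurable lborel"
      using borel_measurable_rescaled[OF lipschitz_on_continuous_on[OF lip]]
        borel_measurable_integrable[OF assms(3)]
      by measurable
    show "AE y in lborel. norm ((g (y / t) - g (u / t)) * \<phi> y) \<le> norm (L * R / t * \<phi> y)"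
      using le order_trans[OF le abs_ge_self] by (intro always_eventually allI) (simp only: real_norm_def)
  qed (use assms(3) in simp)
  have "(LINT y|lborel. g (y / t) * \<phi> y) - g (u / t) * (LINT y|lborel. \<phi> y)
      = (LINT y|lborel. (g (y / t) - g (u / t)) * \<phi> y)"
  proof -
    have "integrable lborel (\<lambda>y. g (y / t) * \<phi> y)"
      using Bochner_Integration.integrable_add[OF int integrable_mult_right[OF assms(3), of "g (u / t)"]]
      by (simp add: algebra_simps)
    then show ?thesis
      using assms(3) by (simp add: left_diff_distrib Bochner_Integration.integral_diff)
  qed
  also have "\<bar>\<dots>\<bar> \<le> (LINT y|lborel. L * R / t * \<phi> y)"
    using int assms(3) le by (intro integral_abs_bound[THEN order_trans] integral_mono) auto
  finally show ?thesis by simp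
qed

lemma edgeworth_sum_leading_term:
  fixes \<phi> :: "real \<Rightarrow> real"
  assumes Nr: "Nr \<ge> 1" and s: "s > 0" and P0: "P 0 = 1"
    and Bf: "\<And>p z. \<bar>poly (P p) z * gauss_dens s z\<bar> \<le> Bf p" and \<phi>: "integrable lborel \<phi>"
  shows "\<bar>sqrt Nr * edgeworth_sum s P r Nr \<phi> - (LINT y|lborel. gauss_dens s (y / sqrt Nr) * \<phi> y)\<bar>
      \<le> (\<Sum>p\<le>r. \<bar>Bf p\<bar>) * (LINT y|lborel. \<bar>\<phi> y\<bar>) / sqrt Nr"
proof -
  define t where "t = sqrt Nr"
  have t: "t > 0" using Nr by (auto simp: t_def)
  define I where "I p = (LINT y|lborel. poly (P p) (y / t) * gauss_dens s (y / t) * \<phi> y)" for p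
  have term_eq: "(LINT z|lborel. poly (P p) z * gauss_dens s z * \<phi> (z * t)) = I p / t" for p
    using lborel_integral_rescale[OF t, of "\<lambda>z. poly (P p) z * gauss_dens s z" \<phi>]
    by (simp add: I_def)
  have I_le: "\<bar>I p\<bar> \<le> \<bar>Bf p\<bar> * (LINT y|lborel. \<bar>\<phi> y\<bar>)" for p
  proof -
    have "continuous_on UNIV (\<lambda>z. poly (P p) z * gauss_dens s z)"
      by (intro continuous_intros continuous_on_gauss_dens s)
    moreover have "Bf p * (LINT y|lborel. \<bar>\<phi> y\<bar>) \<le> \<bar>Bf p\<bar> * (LINT y|lborel. \<bar>\<phi> y\<bar>)"
      by (intro mult_right_mono integral_nonneg_AE) auto
    ultimately show ?thesis
      using abs_integral_rescaled_bounded_times_le[OF _ Bf[of p] \<phi>, where t=t] unfolding I_def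
      by fastforce
  qed
  have higher_term_le: "\<bar>Nr powr (- real p / 2) * I p\<bar> \<le> \<bar>Bf p\<bar> * (LINT y|lborel. \<bar>\<phi> y\<bar>) / t"
    if "p \<ge> 1" for p
  proof -
    have "Nr powr (- real p / 2) \<le> Nr powr (- 1 / 2)"
      using Nr that by (intro powr_mono) auto
    also have "\<dots> = 1 / t" using Nr by (simp add: t_def powr_minus_divide powr_half_sqrt)
    finally have "Nr powr (- real p / 2) * \<bar>I p\<bar> \<le> 1 / t * (\<bar>Bf p\<bar> * (LINT y|lborel. \<bar>\<phi> y\<bar>))"
      using I_le t by (intro mult_mono) auto
    then show ?thesis by (simp add: abs_mult)
  qed
  have "t * edgeworth_sum s P r Nr \<phi> = I 0 + (\<Sum>p\<in>{1..r}. Nr powr (- real p / 2) * I p)"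
    unfolding edgeworth_sum_def t_def[symmetric] term_eq
    using Nr t by (subst atMost_atLeast0, subst sum.atLeast_Suc_atMost)
      (auto simp: distrib_left sum_distrib_left)
  moreover have "I 0 = (LINT y|lborel. gauss_dens s (y / t) * \<phi> y)" by (simp add: I_def P0)
  moreover have "\<bar>\<Sum>p\<in>{1..r}. Nr powr (- real p / 2) * I p\<bar>
      \<le> (\<Sum>p\<in>{1..r}. \<bar>Bf p\<bar> * (LINT y|lborel. \<bar>\<phi> y\<bar>) / t)"
    by (intro sum_abs[THEN order_trans] sum_mono higher_term_le) auto
  moreover have "(\<Sum>p\<in>{1..r}. \<bar>Bf p\<bar> * (LINT y|lborel. \<bar>\<phi> y\<bar>) / t)
      \<le> (\<Sum>p\<le>r. \<bar>Bf p\<bar>) * (LINT y|lborel. \<bar>\<phi> y\<bar>) / t"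
    using t by (auto simp: sum_divide_distrib sum_distrib_right intro!: sum_mono2 divide_nonneg_pos)
  ultimately show ?thesis by (simp add: t_def)
qed

lemma edgeworth_sum_window_estimate:
  fixes \<phi> :: "real \<Rightarrow> real"
  assumes Nr: "Nr \<ge> 1" and s: "s > 0" and P0: "P 0 = 1"
    and Bf: "\<And>p z. \<bar>poly (P p) z * gauss_dens s z\<bar> \<le> Bf p"
    and lip: "L-lipschitz_on UNIV (gauss_dens s)"
    and \<epsilon>: "0 < \<epsilon>" "\<epsilon> \<le> 1" and \<delta>: "\<delta> \<le> 1/2"
    and \<phi>: "integrable lborel \<phi>" "\<And>y. 0 \<le> \<phi> y" "\<And>y. 2 * \<epsilon> < \<bar>y - u\<bar> \<Longrightarrow> \<phi> y = 0"
    and mass: "\<bar>(LINT y|lborel. \<phi> y) - 2 * \<epsilon>\<bar> \<le> 2 * \<epsilon> * \<delta>"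
  shows "\<bar>sqrt Nr / (2 * \<epsilon>) * edgeworth_sum s P r Nr \<phi> - gauss_dens s (u / sqrt Nr)\<bar>
      \<le> \<delta> / sqrt (2 * pi * s) + (3 * L + 3/2 * (\<Sum>p\<le>r. \<bar>Bf p\<bar>)) / sqrt Nr"
proof -
  define t where "t = sqrt Nr"
  have t: "t > 0" using Nr by (auto simp: t_def)
  define J where "J = (LINT y|lborel. \<phi> y)"
  define I0 where "I0 = (LINT y|lborel. gauss_dens s (y / t) * \<phi> y)"
  define gu where "gu = gauss_dens s (u / t)"
  define BB where "BB = (\<Sum>p\<le>r. \<bar>Bf p\<bar>)"
  have "2 * \<epsilon> * \<delta> \<le> 2 * \<epsilon> * (1/2)" using \<delta> \<epsilon> by (intro mult_left_mono) auto
  then have J: "J \<le> 3 * \<epsilon>" using mass by (simp add: J_def abs_le_iff)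
  have L1_eq: "(LINT y|lborel. \<bar>\<phi> y\<bar>) = J" using \<phi>(2) by (simp add: J_def)
  have BB: "0 \<le> BB" by (simp add: BB_def sum_nonneg)
  have gu: "0 \<le> gu" "gu \<le> 1 / sqrt (2 * pi * s)"
    using gauss_dens_pos[OF s] gauss_dens_le[OF s] by (auto simp: gu_def less_imp_le)
  have higher: "\<bar>(t * edgeworth_sum s P r Nr \<phi> - I0) / (2 * \<epsilon>)\<bar> \<le> 3/2 * BB / t"
  proof -
    have "\<bar>t * edgeworth_sum s P r Nr \<phi> - I0\<bar> \<le> BB * J / t"
      using edgeworth_sum_leading_term[where P=P and Bf=Bf and r=r, OF Nr s P0 Bf \<phi>(1)]
      by (simp add: I0_def t_def BB_def L1_eq)
    also have "\<dots> \<le> BB * (3 * \<epsilon>) / t"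
      using t J BB by (intro divide_right_mono mult_left_mono) auto
    finally show ?thesis using \<epsilon> by (simp add: field_simps)
  qed
  have smoothing: "\<bar>(I0 - gu * J) / (2 * \<epsilon>)\<bar> \<le> 3 * L / t"
  proof -
    have "\<bar>I0 - gu * J\<bar> \<le> L * (2 * \<epsilon>) / t * J"
      unfolding I0_def gu_def J_def by (rule integral_rescaled_lipschitz_times[OF lip t(1) \<phi>])
    then have "\<bar>(I0 - gu * J) / (2 * \<epsilon>)\<bar> \<le> L * J / t" using \<epsilon> by (simp add: field_simps)
    also have "\<dots> \<le> L * 3 / t"
      using J \<epsilon> t lipschitz_on_nonneg[OF lip] by (intro divide_right_mono mult_left_mono) auto
    finally show ?thesis by simp
  qed
  have mass_error: "\<bar>gu * (J / (2 * \<epsilon>) - 1)\<bar> \<le> \<delta> / sqrt (2 * pi * s)"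
  proof -
    have "\<bar>J / (2 * \<epsilon>) - 1\<bar> \<le> \<delta>"
      using mass \<epsilon> by (simp add: J_def abs_le_iff field_simps)
    then have "gu * \<bar>J / (2 * \<epsilon>) - 1\<bar> \<le> 1 / sqrt (2 * pi * s) * \<delta>"
      using gu s by (intro mult_mono) auto
    then show ?thesis using gu by (simp add: abs_mult)
  qed
  have "t / (2 * \<epsilon>) * edgeworth_sum s P r Nr \<phi> - gu
      = (t * edgeworth_sum s P r Nr \<phi> - I0) / (2 * \<epsilon>) + (I0 - gu * J) / (2 * \<epsilon>)
        + gu * (J / (2 * \<epsilon>) - 1)"
    using \<epsilon> by (simp add: field_simps)
  then have "\<bar>t / (2 * \<epsilon>) * edgeworth_sum s P r Nr \<phi> - gu\<bar> \<le> 3/2 * BB / t + 3 * L / t + \<delta> / sqrt (2 * pi * s)"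
    using higher smoothing mass_error by linarith
  then show ?thesis by (simp add: t_def gu_def BB_def add_divide_distrib)
qed

section \<open>Local limit theorem from the Edgeworth expansion\<close>

lemma edgeworth_error_of_real:
  fixes \<phi> :: "real \<Rightarrow> real" and Z :: "'a \<Rightarrow> real"
  shows "norm (integral\<^sup>L M (\<lambda>x. complex_of_real (\<phi> (Z x)))
      - (\<Sum>p\<le>r. complex_of_real (Nr powr (- real p / 2)) *
          (LINT z|lborel. complex_of_real (poly (P p) z * gauss_dens s z) * complex_of_real (\<phi> (z * sqrt Nr)))))
    = \<bar>integral\<^sup>L M (\<lambda>x. \<phi> (Z x)) - edgeworth_sum s P r Nr \<phi>\<bar>"
proof -
  have "(\<Sum>p\<le>r. complex_of_real (Nr powr (- real p / 2)) *
          (LINT z|lborel. complex_of_real (poly (P p) z * gauss_dens s z) * complex_of_real (\<phi> (z * sqrt Nr))))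
      = complex_of_real (edgeworth_sum s P r Nr \<phi>)"
    unfolding edgeworth_sum_def
    by (simp only: of_real_mult[symmetric] integral_complex_of_real of_real_sum)
  then show ?thesis by (simp only: integral_complex_of_real of_real_diff[symmetric] norm_of_real)
qed

lemma smooth_plateau_expectation_estimate:
  fixes M :: "'a measure" and Z :: "'a \<Rightarrow> real"
  assumes Nr: "Nr \<ge> 1" and s: "s > 0" and P0: "P 0 = 1"
    and Bf: "\<And>p z. \<bar>poly (P p) z * gauss_dens s z\<bar> \<le> Bf p"
    and lip: "L-lipschitz_on UNIV (gauss_dens s)"
    and \<epsilon>: "0 < \<epsilon>" "\<epsilon> \<le> 1" and \<delta>: "0 < \<delta>" "\<delta> \<le> 1/2" and d: "0 \<le> d"
    and edgeworth: "\<And>f. F10 f \<Longrightarrow>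
      norm (integral\<^sup>L M (\<lambda>x. f (Z x)) - (\<Sum>p\<le>r. complex_of_real (Nr powr (- real p / 2)) *
          (LINT z|lborel. complex_of_real (poly (P p) z * gauss_dens s z) * f (z * sqrt Nr))))
        \<le> C10 f * d * Nr powr (- (real r + 1) / 2)"
    and ab: "a \<le> b" "u - 2 * \<epsilon> \<le> a - \<delta> * \<epsilon>" "b + \<delta> * \<epsilon> \<le> u + 2 * \<epsilon>"
      "2 * \<epsilon> * (1 - \<delta>) \<le> b - a" "b - a + 2 * (\<delta> * \<epsilon>) \<le> 2 * \<epsilon> * (1 + \<delta>)"
  shows "\<bar>sqrt Nr / (2 * \<epsilon>) * (\<integral>x. smooth_plateau a b (\<delta> * \<epsilon>) (Z x) \<partial>M) - gauss_dens s (u / sqrt Nr)\<bar>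
      \<le> \<delta> / sqrt (2 * pi * s) + (6 + 9 / \<delta>) * d / (2 * \<epsilon> * Nr powr (real r / 2))
        + (3 * L + 3/2 * (\<Sum>p\<le>r. \<bar>Bf p\<bar>)) / sqrt Nr"
proof -
  define c where "c = \<delta> * \<epsilon>"
  have c: "c > 0" using \<delta> \<epsilon> by (simp add: c_def)
  define E where "E = (\<integral>x. smooth_plateau a b c (Z x) \<partial>M)"
  have "C10 (\<lambda>x. complex_of_real (smooth_plateau a b c x)) \<le> (b - a + 2 * c) * (2 + 3 / c)"
    by (rule C10_smooth_plateau_le[OF c ab(1)])
  also have "\<dots> \<le> (3 * \<epsilon>) * (2 + 3 / c)"
  proof (intro mult_right_mono)
    have "2 * \<epsilon> * \<delta> \<le> 2 * \<epsilon> * (1/2)" using \<delta> \<epsilon> by (intro mult_left_mono) auto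
    then show "b - a + 2 * c \<le> 3 * \<epsilon>" using ab(5) by (simp add: c_def algebra_simps)
  qed (use c in simp)
  also have "\<dots> = 6 * \<epsilon> + 9 / \<delta>" using \<delta> \<epsilon> by (simp add: c_def field_simps)
  also have "\<dots> \<le> 6 + 9 / \<delta>" using \<epsilon> by simp
  finally have C10_le: "C10 (\<lambda>x. complex_of_real (smooth_plateau a b c x)) \<le> 6 + 9 / \<delta>" .
  have "\<bar>E - edgeworth_sum s P r Nr (smooth_plateau a b c)\<bar>
      \<le> C10 (\<lambda>x. complex_of_real (smooth_plateau a b c x)) * d * Nr powr (- (real r + 1) / 2)"
    using edgeworth[OF F10_smooth_plateau[OF c ab(1)]]
      edgeworth_error_of_real[where \<phi>="smooth_plateau a b c" and Z=Z and M=M and P=P and s=s and r=r and Nr=Nr]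
    by (simp add: E_def)
  also have "\<dots> \<le> (6 + 9 / \<delta>) * d * Nr powr (- (real r + 1) / 2)"
    using C10_le d by (intro mult_right_mono) auto
  finally have expansion_bound: "\<bar>E - edgeworth_sum s P r Nr (smooth_plateau a b c)\<bar>
      \<le> (6 + 9 / \<delta>) * d * Nr powr (- (real r + 1) / 2)" .
  have "sqrt Nr * Nr powr (- (real r + 1) / 2) = Nr powr (1/2 + (- (real r + 1) / 2))"
    using Nr by (simp add: powr_add powr_half_sqrt)
  also have "\<dots> = 1 / Nr powr (real r / 2)" by (simp add: field_simps powr_minus_divide)
  finally have sqrt_powr: "sqrt Nr * Nr powr (- (real r + 1) / 2) = 1 / Nr powr (real r / 2)" .
  have "\<bar>sqrt Nr / (2 * \<epsilon>) * (E - edgeworth_sum s P r Nr (smooth_plateau a b c))\<bar>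
      = sqrt Nr / (2 * \<epsilon>) * \<bar>E - edgeworth_sum s P r Nr (smooth_plateau a b c)\<bar>"
    using \<epsilon> Nr by (simp add: abs_mult)
  also have "\<dots> \<le> sqrt Nr / (2 * \<epsilon>) * ((6 + 9 / \<delta>) * d * Nr powr (- (real r + 1) / 2))"
    using expansion_bound \<epsilon> Nr by (intro mult_left_mono) auto
  also have "\<dots> = (6 + 9 / \<delta>) * d / (2 * \<epsilon>) * (sqrt Nr * Nr powr (- (real r + 1) / 2))"
    by (simp only: divide_inverse mult_ac)
  also have "\<dots> = (6 + 9 / \<delta>) * d / (2 * \<epsilon> * Nr powr (real r / 2))"
    unfolding sqrt_powr by simp
  finally have expansion_error: "\<bar>sqrt Nr / (2 * \<epsilon>) * (E - edgeworth_sum s P r Nr (smooth_plateau a b c))\<bar>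
      \<le> (6 + 9 / \<delta>) * d / (2 * \<epsilon> * Nr powr (real r / 2))" .
  have mass: "\<bar>(LINT y|lborel. smooth_plateau a b c y) - 2 * \<epsilon>\<bar> \<le> 2 * \<epsilon> * \<delta>"
    using integral_smooth_plateau_bounds[OF c ab(1)] ab(4,5) by (simp add: abs_le_iff c_def algebra_simps)
  have "\<bar>sqrt Nr / (2 * \<epsilon>) * edgeworth_sum s P r Nr (smooth_plateau a b c) - gauss_dens s (u / sqrt Nr)\<bar>
      \<le> \<delta> / sqrt (2 * pi * s) + (3 * L + 3/2 * (\<Sum>p\<le>r. \<bar>Bf p\<bar>)) / sqrt Nr"
  proof -
    have "y \<notin> {a - c<..<b + c}" if "2 * \<epsilon> < \<bar>y - u\<bar>" for y
      using that ab(2,3) by (auto simp: c_def abs_if split: if_split_asm)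
    then show ?thesis
      using smooth_plateau_outside[OF c] smooth_plateau_bounds mass
      by (intro edgeworth_sum_window_estimate[where P=P and Bf=Bf, OF Nr s P0 Bf lip \<epsilon> \<delta>(2)] integrable_smooth_plateau c ab(1))
       (auto simp: c_def)
  qed
  with expansion_error show ?thesis
    unfolding E_def c_def by (simp add: abs_le_iff right_diff_distrib)
qed

lemma window_probability_estimate:
  fixes M :: "'a measure" and Z :: "'a \<Rightarrow> real"
  assumes M: "prob_space M" and Z: "Z \<in> borel_measurable M"
    and Nr: "Nr \<ge> 1" and s: "s > 0" and P0: "P 0 = 1"
    and Bf: "\<And>p z. \<bar>poly (P p) z * gauss_dens s z\<bar> \<le> Bf p"
    and lip: "L-lipschitz_on UNIV (gauss_dens s)"
    and \<epsilon>: "0 < \<epsilon>" "\<epsilon> \<le> 1" and \<delta>: "0 < \<delta>" "\<delta> \<le> 1/2" and d: "0 \<le> d"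
    and edgeworth: "\<And>f. F10 f \<Longrightarrow>
      norm (integral\<^sup>L M (\<lambda>x. f (Z x)) - (\<Sum>p\<le>r. complex_of_real (Nr powr (- real p / 2)) *
          (LINT z|lborel. complex_of_real (poly (P p) z * gauss_dens s z) * f (z * sqrt Nr))))
        \<le> C10 f * d * Nr powr (- (real r + 1) / 2)"
  shows "\<bar>sqrt Nr / (2 * \<epsilon>) * measure M {x \<in> space M. Z x \<in> {u - \<epsilon><..<u + \<epsilon>}}
        - 1 / sqrt (2 * pi * s) * exp (- (u^2) / (2 * Nr * s))\<bar>
      \<le> \<delta> / sqrt (2 * pi * s) + (6 + 9 / \<delta>) * d / (2 * \<epsilon> * Nr powr (real r / 2))
        + (3 * L + 3/2 * (\<Sum>p\<le>r. \<bar>Bf p\<bar>)) / sqrt Nr"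
proof -
  interpret prob_space M by (fact M)
  define c where "c = \<delta> * \<epsilon>"
  have c: "c > 0" using \<delta> \<epsilon> by (auto simp: c_def)
  define B where "B = \<delta> / sqrt (2 * pi * s) + (6 + 9 / \<delta>) * d / (2 * \<epsilon> * Nr powr (real r / 2))
      + (3 * L + 3/2 * (\<Sum>p\<le>r. \<bar>Bf p\<bar>)) / sqrt Nr"
  have estimate: "\<bar>sqrt Nr / (2 * \<epsilon>) * (\<integral>x. smooth_plateau a b c (Z x) \<partial>M) - gauss_dens s (u / sqrt Nr)\<bar> \<le> B"
    if "a \<le> b" "u - 2 * \<epsilon> \<le> a - c" "b + c \<le> u + 2 * \<epsilon>"
      "2 * \<epsilon> * (1 - \<delta>) \<le> b - a" "b - a + 2 * c \<le> 2 * \<epsilon> * (1 + \<delta>)" for a b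
    using smooth_plateau_expectation_estimate[where P=P and Bf=Bf,
        OF Nr s P0 Bf lip \<epsilon> \<delta> d edgeworth that[unfolded c_def]]
    by (simp add: B_def c_def)
  have "\<bar>sqrt Nr / (2 * \<epsilon>) * (\<integral>x. smooth_plateau (u - \<epsilon> + c) (u + \<epsilon> - c) c (Z x) \<partial>M)
      - gauss_dens s (u / sqrt Nr)\<bar> \<le> B"
    using c \<epsilon> \<delta> by (intro estimate) (auto simp: c_def algebra_simps)
  moreover have "\<bar>sqrt Nr / (2 * \<epsilon>) * (\<integral>x. smooth_plateau (u - \<epsilon>) (u + \<epsilon>) c (Z x) \<partial>M)
      - gauss_dens s (u / sqrt Nr)\<bar> \<le> B"
    using c \<epsilon> \<delta> by (intro estimate) (auto simp: c_def algebra_simps)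
  moreover have "sqrt Nr / (2 * \<epsilon>) > 0" using Nr \<epsilon> by simp
  ultimately show ?thesis
    using mult_left_mono[OF expectation_smooth_plateau_le_measure[OF finite_measure_axioms Z c(1),
        of "u - \<epsilon> + c" "u + \<epsilon> - c"], of "sqrt Nr / (2 * \<epsilon>)"]
      mult_left_mono[OF measure_le_expectation_smooth_plateau[OF finite_measure_axioms Z c(1),
        of "u - \<epsilon>" "u + \<epsilon>"], of "sqrt Nr / (2 * \<epsilon>)"]
    unfolding B_def[symmetric] gauss_dens_rescaled[OF less_le_trans[OF zero_less_one Nr]]
    by (simp add: abs_le_iff)
qed

lemma window_error_tendsto_zero:
  fixes d \<epsilon> :: "nat \<Rightarrow> real"
  assumes "d \<longlonglongrightarrow> 0" and "filterlim (\<lambda>N. \<epsilon> N * real N powr (real r / 2)) at_top sequentially"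
  shows "(\<lambda>N. K * \<bar>d N\<bar> / (2 * \<epsilon> N * real N powr (real r / 2)) + C / sqrt (real N)) \<longlonglongrightarrow> 0"
proof -
  have "(\<lambda>N. K / 2 * \<bar>d N\<bar> * inverse (\<epsilon> N * real N powr (real r / 2))) \<longlonglongrightarrow> K / 2 * 0 * 0"
    by (intro tendsto_mult tendsto_const tendsto_rabs_zero assms tendsto_inverse_0_at_top)
  moreover have "(\<lambda>N. C / sqrt (real N)) \<longlonglongrightarrow> 0"
    by (intro tendsto_divide_0[OF tendsto_const] filterlim_at_top_imp_at_infinity
        filterlim_compose[OF sqrt_at_top filterlim_real_sequentially])
  ultimately have lim: "(\<lambda>N. K / 2 * \<bar>d N\<bar> * inverse (\<epsilon> N * real N powr (real r / 2)) + C / sqrt (real N))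
      \<longlonglongrightarrow> 0"
    using tendsto_add by fastforce
  have "K / 2 * \<bar>d N\<bar> * inverse (\<epsilon> N * real N powr (real r / 2))
      = K * \<bar>d N\<bar> / (2 * \<epsilon> N * real N powr (real r / 2))" for N
    unfolding divide_inverse inverse_mult_distrib by (simp only: mult_ac)
  then show ?thesis using lim by (simp only:)
qed

lemma local_limit_theorem_from_edgeworth:
  fixes M :: "'a measure" and S :: "nat \<Rightarrow> 'a \<Rightarrow> real" and d eps :: "nat \<Rightarrow> real"
  assumes M: "prob_space M" and S: "\<And>N. S N \<in> borel_measurable M"
    and s: "s > 0" and P0: "P 0 = 1" and d: "d \<longlonglongrightarrow> 0"
    and expansion: "\<forall>\<^sub>F N in sequentially. \<forall>f. F10 f \<longrightarrow>
      norm (integral\<^sup>L M (\<lambda>x. f (S N x)) - (\<Sum>p\<le>r. complex_of_real (real N powr (- real p / 2)) *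
          (LINT z|lborel. complex_of_real (poly (P p) z * gauss_dens s z) * f (z * sqrt (real N)))))
        \<le> C10 f * \<bar>d N\<bar> * real N powr (- (real r + 1) / 2)"
    and eps_pos: "\<And>N. eps N > 0" and eps_lim: "eps \<longlonglongrightarrow> 0"
    and eps_growth: "filterlim (\<lambda>N. eps N * real N powr (real r / 2)) at_top sequentially"
  shows "\<forall>e>0. \<forall>\<^sub>F N in sequentially. \<forall>u.
    \<bar>sqrt (real N) / (2 * eps N) * measure M {x \<in> space M. S N x \<in> {u - eps N <..< u + eps N}}
      - 1 / sqrt (2 * pi * s) * exp (- (u^2) / (2 * real N * s))\<bar> < e"
proof (intro allI impI)
  fix e :: real assume e: "e > 0"
  obtain L where lip: "L-lipschitz_on UNIV (gauss_dens s)"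
    using gauss_dens_lipschitz[OF s] by blast
  have "\<forall>p. \<exists>B. \<forall>z. \<bar>poly (P p) z * gauss_dens s z\<bar> \<le> B"
    using poly_times_gauss_dens_bounded[OF s] by blast
  then obtain Bf where Bf: "\<And>p z. \<bar>poly (P p) z * gauss_dens s z\<bar> \<le> Bf p"
    by metis
  define \<delta> where "\<delta> = min (1/2) (e / 2 * sqrt (2 * pi * s))"
  have \<delta>: "0 < \<delta>" "\<delta> \<le> 1/2" "\<delta> / sqrt (2 * pi * s) \<le> e / 2"
    using e s by (auto simp: \<delta>_def min_def divide_le_eq)
  have "\<forall>\<^sub>F N in sequentially. (6 + 9 / \<delta>) * \<bar>d N\<bar> / (2 * eps N * real N powr (real r / 2))
      + (3 * L + 3/2 * (\<Sum>p\<le>r. \<bar>Bf p\<bar>)) / sqrt (real N) < e / 2"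
    using e by (intro order_tendstoD(2)[OF window_error_tendsto_zero[OF d eps_growth]]) simp
  moreover have "\<forall>\<^sub>F N in sequentially. eps N < 1"
    using order_tendstoD(2)[OF eps_lim] by simp
  ultimately show "\<forall>\<^sub>F N in sequentially. \<forall>u.
    \<bar>sqrt (real N) / (2 * eps N) * measure M {x \<in> space M. S N x \<in> {u - eps N <..< u + eps N}}
      - 1 / sqrt (2 * pi * s) * exp (- (u^2) / (2 * real N * s))\<bar> < e"
    using expansion eventually_ge_at_top[of 1]
  proof eventually_elim
    case (elim N)
    have N: "real N \<ge> 1" using elim(4) by simp
    have "\<delta> / sqrt (2 * pi * s) + (6 + 9 / \<delta>) * \<bar>d N\<bar> / (2 * eps N * real N powr (real r / 2))
        + (3 * L + 3/2 * (\<Sum>p\<le>r. \<bar>Bf p\<bar>)) / sqrt (real N) < e"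
      using elim(1) \<delta>(3) by linarith
    then show ?case
      using elim(3)
      by (intro allI order.strict_trans1[OF window_probability_estimate[where P=P and Bf=Bf,
            OF M S N s P0 Bf lip eps_pos less_imp_le[OF elim(2)] \<delta>(1,2) abs_ge_zero]]) auto
  qed
qed

theorem proposition5p2:
  fixes M :: "'a measure" and X :: "nat \<Rightarrow> 'a \<Rightarrow> real"
    and sigma2 :: real and r :: nat and P :: "nat \<Rightarrow> real poly" and eps :: "nat \<Rightarrow> real"
  assumes "prob_space M"
    and rv: "\<And>n. X n \<in> borel_measurable M"
    and sigma_pos: "sigma2 > 0"
    and r_ge: "r \<ge> 1"
    and mean0: "(\<lambda>N. integral\<^sup>L M (\<lambda>x. (\<Sum>n\<in>{1..N}. X n x) / real N)) \<longlonglongrightarrow> 0"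
    and P0: "P 0 = 1"
    and edgeworth: "\<exists>\<delta>::nat \<Rightarrow> real. \<delta> \<longlonglongrightarrow> 0 \<and>
        (\<forall>\<^sub>F N in sequentially. \<forall>f. F10 f \<longrightarrow>
          norm (integral\<^sup>L M (\<lambda>x. f (\<Sum>n\<in>{1..N}. X n x))
            - (\<Sum>p\<le>r. complex_of_real (real N powr (- real p / 2)) *
                 (LINT z|lborel. complex_of_real (poly (P p) z * gauss_dens sigma2 z) * f (z * sqrt (real N)))))
          \<le> C10 f * \<bar>\<delta> N\<bar> * real N powr (- (real r + 1) / 2))"
    and eps_pos: "\<And>N. eps N > 0"
    and eps_lim: "eps \<longlonglongrightarrow> 0"
    and eps_growth: "filterlim (\<lambda>N. eps N * real N powr (real r / 2)) at_top sequentially"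
  shows "\<forall>e>0. \<forall>\<^sub>F N in sequentially. \<forall>u::real.
           \<bar>sqrt (real N) / (2 * eps N) *
              measure M {x \<in> space M. (\<Sum>n\<in>{1..N}. X n x) \<in> {u - eps N <..< u + eps N}}
            - 1 / sqrt (2 * pi * sigma2) * exp (- (u^2) / (2 * real N * sigma2))\<bar> < e"
  by (rule exE[OF edgeworth], elim conjE,
      rule local_limit_theorem_from_edgeworth[where S="\<lambda>N x. \<Sum>n\<in>{1..N}. X n x"])
     (use \<open>prob_space M\<close> rv sigma_pos P0 eps_pos eps_lim eps_growth
       in \<open>auto intro!: borel_measurable_sum\<close>)

end
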